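(* Suppose $\mathrm{edim}(R) = n \ge 2$ and let $w_1 < w_2 < \cdots < w_N$ be the minimal generators of the numerical semigroup $V(R)$. Then $a_1 = w_1$, $a_2 = w_2$, and $$\{a_1, \ldots, a_n\} \subseteq \{w_1, \ldots, w_N\}.$$ If $R$ is a numerical semigroup ring, i.e. $R = k[[t^{w_1}, \ldots, t^{w_N}]]$, then $\{a_1, \ldots, a_n\} = \{w_1, \ldots, w_N\}$.
   Context: Let $k$ be a field and let $(R,\mathfrak m)$ be a complete local noetherian domain of dimension $1$ containing $k$ with $R/\mathfrak m = k$, with normalization $\overline R$ having residue field $k$, so $\overline R = k[[t]]$ and $R \subseteq k[[t]]$ is finite birational. Let $v$ be the $t$-adic valuation. For $A \subseteq k((t))$ let $v(A) = \{v(f): f\in A\setminus\{0\}\}$; $V(R) = v(R)$ is the value semigroup of $R$ (a numerical semigroup). The Herzog–Kunz sequence of $R$ is $v(\mathfrak m)\setminus v(\mathfrak m^2)$ listed increasingly as $a_1 < \cdots < a_n$, where $n = \mathrm{edim}(R) = \dim_k\mathfrak m/\mathfrak m^2$. *)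

theory Defs
  imports "HOL-Computational_Algebra.Formal_Power_Series"
begin

text \<open>Setting: k is the field 'a (k = UNIV), the normalization is k[[t]] = 'a fps,
  and R is a subring of k[[t]] containing k.\<close>

definition k_subalgebra :: "('a::field) fps set \<Rightarrow> bool" where
  "k_subalgebra R \<longleftrightarrow> (\<forall>c. fps_const c \<in> R) \<and>
     (\<forall>f\<in>R. \<forall>g\<in>R. f + g \<in> R \<and> f * g \<in> R \<and> - f \<in> R)"

definition normalization_finite :: "('a::field) fps set \<Rightarrow> bool" where
  "normalization_finite R \<longleftrightarrow>
     (\<exists>gs :: 'a fps list. \<forall>f :: 'a fps. \<exists>rs. length rs = length gs \<and> set rs \<subseteq> R \<and>
        f = (\<Sum>i<length gs. rs ! i * gs ! i))"

definition birational :: "('a::field) fps set \<Rightarrow> bool" where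
  "birational R \<longleftrightarrow> (\<forall>f :: 'a fps. \<exists>a\<in>R. \<exists>b\<in>R. b \<noteq> 0 \<and> f * b = a)"

definition max_ideal :: "('a::field) fps set \<Rightarrow> 'a fps set" where
  "max_ideal R = {f \<in> R. \<not> (\<exists>g\<in>R. f * g = 1)}"

definition ideal_prod :: "('a::comm_ring_1) fps set \<Rightarrow> 'a fps set \<Rightarrow> 'a fps set" where
  "ideal_prod I J = {sum_list (map (\<lambda>(x, y). x * y) ps) | ps. set ps \<subseteq> I \<times> J}"

definition vals :: "('a::zero) fps set \<Rightarrow> nat set" where
  "vals A = subdegree ` (A - {0})"

text \<open>Embedding dimension: dim_k (m / m^2) = n, witnessed by a basis of n classes.\<close>
definition has_edim :: "('a::field) fps set \<Rightarrow> nat \<Rightarrow> bool" where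
  "has_edim R n \<longleftrightarrow> (let m = max_ideal R; m2 = ideal_prod m m in
     \<exists>fs :: 'a fps list. length fs = n \<and> set fs \<subseteq> m \<and>
       (\<forall>g\<in>m. \<exists>cs :: 'a list. length cs = n \<and>
            g - (\<Sum>i<n. fps_const (cs ! i) * fs ! i) \<in> m2) \<and>
       (\<forall>cs :: 'a list. length cs = n \<longrightarrow>
            (\<Sum>i<n. fps_const (cs ! i) * fs ! i) \<in> m2 \<longrightarrow> (\<forall>i<n. cs ! i = 0)))"

definition min_gens :: "nat set \<Rightarrow> nat set" where
  "min_gens S = {s \<in> S. 0 < s \<and> \<not> (\<exists>x\<in>S. \<exists>y\<in>S. 0 < x \<and> 0 < y \<and> s = x + y)}"

definition HK_set :: "('a::field) fps set \<Rightarrow> nat set" where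
  "HK_set R = vals (max_ideal R) - vals (ideal_prod (max_ideal R) (max_ideal R))"

text \<open>Semigroup ring k[[S]] = k[[t^s : s \<in> S]]: power series supported on S.\<close>
definition semigroup_ring :: "nat set \<Rightarrow> ('a::field) fps set" where
  "semigroup_ring S = {f. \<forall>i. fps_nth f i \<noteq> 0 \<longrightarrow> i \<in> S}"

end

theory Submission
  imports Defs
begin

text \<open>Since k[[t]] is finite and birational over \<open>R\<close>, the ring \<open>R\<close> contains \<open>t\<^sup>N k[[t]]\<close> for
  some \<open>N\<close>; so \<open>V = v(R)\<close> is a numerical semigroup and the maximal ideal \<open>m\<close> of \<open>R\<close> consists of
  the elements without constant term. The value of a product of two elements of \<open>m\<close> is a sum
  of two positive values, so \<open>v(m) - v(m\<^sup>2)\<close> consists of minimal generators; for \<open>R = k[[t\<^sup>V]]\<close>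
  every element of \<open>m\<^sup>2\<close> is even supported on such sums, which gives equality.

  Let \<open>w\<^sub>1\<close> be the least positive value, attained by \<open>x \<in> R\<close>. Elements of \<open>m\<^sup>2\<close> have order at
  least \<open>2 w\<^sub>1\<close>, so \<open>w\<^sub>1 \<notin> v(m\<^sup>2)\<close>. If \<open>w\<^sub>1 = 1\<close>, successive approximation by polynomials in \<open>x\<close>
  gives \<open>R = k[[t]]\<close>, whose embedding dimension is 1. Otherwise let \<open>w\<^sub>2\<close> be the least value not
  divisible by \<open>w\<^sub>1\<close>; it is the second smallest minimal generator. The same approximation shows
  that every element of \<open>m\<close> agrees with a power series in \<open>x\<close> up to order \<open>w\<^sub>2\<close>, hence every
  element of \<open>m\<^sup>2\<close> up to order \<open>w\<^sub>2 + 1\<close>; the order of a power series in \<open>x\<close> is a multiple of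
  \<open>w\<^sub>1\<close>, so \<open>w\<^sub>2 \<notin> v(m\<^sup>2)\<close>.\<close>

unbundle fps_syntax

lemma fps_X_power_dvd_iff_subdegree:
  fixes f :: "'a::field fps"
  shows "fps_X ^ k dvd f \<longleftrightarrow> f = 0 \<or> k \<le> subdegree f"
  by (cases "f = 0") (simp_all add: fps_dvd_iff fps_X_power_subdegree)

lemma fps_X_power_dvd_iff_nth:
  fixes f :: "'a::field fps"
  shows "fps_X ^ k dvd f \<longleftrightarrow> (\<forall>i<k. f $ i = 0)"
  unfolding fps_X_power_dvd_iff_subdegree
  by (cases "f = 0") (auto intro: subdegree_geI nth_less_subdegree_zero order_less_le_trans)

lemma fps_X_power_Suc_dvd_diff:
  fixes f g :: "'a::field fps"
  assumes "fps_X ^ k dvd f" "fps_X ^ k dvd g" "f $ k = g $ k"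
  shows "fps_X ^ Suc k dvd f - g"
  using assms unfolding fps_X_power_dvd_iff_nth by (auto simp: less_Suc_eq)

lemma fps_X_dvd_iff:
  fixes f :: "'a::field fps"
  shows "fps_X dvd f \<longleftrightarrow> f $ 0 = 0"
  using fps_X_power_dvd_iff_nth[of 1 f] by simp

lemma nth_zero_if_fps_X_power_dvd:
  fixes f :: "'a::field fps"
  shows "fps_X ^ k dvd f \<Longrightarrow> i < k \<Longrightarrow> f $ i = 0"
  unfolding fps_X_power_dvd_iff_nth by blast

lemma subdegree_eq_if_X_power_dvd_diff:
  fixes f g :: "'a::field fps"
  assumes "fps_X ^ Suc (subdegree f) dvd f - g" "f \<noteq> 0"
  shows "g \<noteq> 0 \<and> subdegree g = subdegree f"
proof -
  have agree: "g $ i = f $ i" if "i \<le> subdegree f" for i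
    using nth_zero_if_fps_X_power_dvd[OF assms(1), of i] that by simp
  then have lead: "g $ subdegree f \<noteq> 0"
    using assms(2) by simp
  then have "g \<noteq> 0"
    by (metis fps_zero_nth)
  moreover have "subdegree f \<le> subdegree g"
    using agree \<open>g \<noteq> 0\<close> by (intro subdegree_geI) (auto dest: nth_less_subdegree_zero)
  ultimately show ?thesis
    using subdegree_leI[OF lead] by simp
qed

lemma fps_compose_X_power:
  fixes x :: "'a::idom fps"
  assumes "x $ 0 = 0"
  shows "fps_X ^ q oo x = x ^ q"
  using fps_compose_power[OF assms, of fps_X q] assms by simp

lemma subdegree_compose:
  fixes x b :: "'a::idom fps"
  assumes x0: "x $ 0 = 0" and "x \<noteq> 0" "b \<noteq> 0"
  shows "subdegree (b oo x) = subdegree b * subdegree x"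
proof -
  define d where "d = subdegree b"
  define u where "u = fps_shift d b"
  have "b = u * fps_X ^ d"
    unfolding u_def d_def by (rule subdegree_decompose)
  then have "b oo x = (u oo x) * x ^ d"
    by (simp add: fps_compose_mult_distrib[OF x0] fps_compose_X_power[OF x0])
  moreover have "(u oo x) $ 0 \<noteq> 0"
    using assms by (simp add: u_def d_def)
  moreover from this have "u oo x \<noteq> 0"
    by (metis fps_zero_nth)
  ultimately show ?thesis
    using \<open>x \<noteq> 0\<close> by (simp add: d_def)
qed

lemma min_gens_not_add:
  assumes "g \<in> min_gens S" "x \<in> S" "y \<in> S" "0 < x" "0 < y"
  shows "g \<noteq> x + y"
  using assms unfolding min_gens_def by blast

lemma min_gensI:
  assumes "s \<in> S" "0 < s" "\<And>x y. x \<in> S \<Longrightarrow> y \<in> S \<Longrightarrow> 0 < x \<Longrightarrow> 0 < y \<Longrightarrow> s \<noteq> x + y"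
  shows "s \<in> min_gens S"
  using assms unfolding min_gens_def by blast

lemma mult_mem_if_add_closed:
  fixes S :: "nat set"
  assumes "\<And>s t. s \<in> S \<Longrightarrow> t \<in> S \<Longrightarrow> s + t \<in> S" "s \<in> S" "0 < k"
  shows "k * s \<in> S"
  using assms(3)
proof (induction k rule: nat_induct_non_zero)
  case 1
  show ?case
    using assms(2) by simp
next
  case (Suc k)
  have "s + k * s \<in> S"
    using assms(1)[OF assms(2) Suc.IH] .
  then show ?case
    by simp
qed

lemma finite_min_gens:
  fixes S :: "nat set"
  assumes cofinite: "\<And>s. N \<le> s \<Longrightarrow> s \<in> S"
  shows "finite (min_gens S)"
proof (rule finite_subset)
  show "min_gens S \<subseteq> {..<2 * N + 2}"
  proof
    fix g
    assume g: "g \<in> min_gens S"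
    show "g \<in> {..<2 * N + 2}"
    proof (rule ccontr)
      assume "g \<notin> {..<2 * N + 2}"
      define h where "h = g - (N + 1)"
      have h: "N + 1 \<le> h" "g = (N + 1) + h"
        using \<open>g \<notin> {..<2 * N + 2}\<close> unfolding h_def by auto
      have "g \<noteq> (N + 1) + h"
        using h(1) by (intro min_gens_not_add[OF g] cofinite) simp_all
      then show False
        using h(2) by simp
    qed
  qed
qed simp

lemma obtain_least_positive_and_least_non_multiple:
  fixes S :: "nat set"
  assumes cofinite: "\<And>s. N \<le> s \<Longrightarrow> s \<in> S" and "1 \<notin> S"
  obtains w\<^sub>1 w\<^sub>2 where "w\<^sub>1 \<in> S" "0 < w\<^sub>1" "\<And>s. s \<in> S \<Longrightarrow> 0 < s \<Longrightarrow> w\<^sub>1 \<le> s"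
    "w\<^sub>2 \<in> S" "\<not> w\<^sub>1 dvd w\<^sub>2" "\<And>s. s \<in> S \<Longrightarrow> s < w\<^sub>2 \<Longrightarrow> w\<^sub>1 dvd s"
proof -
  define w\<^sub>1 where "w\<^sub>1 = (LEAST s. s \<in> S \<and> 0 < s)"
  have "N + 1 \<in> S \<and> 0 < N + 1"
    using cofinite by simp
  then have w\<^sub>1: "w\<^sub>1 \<in> S \<and> 0 < w\<^sub>1"
    unfolding w\<^sub>1_def by (rule LeastI)
  have least: "w\<^sub>1 \<le> s" if "s \<in> S" "0 < s" for s
    unfolding w\<^sub>1_def using that by (simp add: Least_le)
  define w\<^sub>2 where "w\<^sub>2 = (LEAST s. s \<in> S \<and> \<not> w\<^sub>1 dvd s)"
  have "w\<^sub>1 \<noteq> 1"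
    using w\<^sub>1 \<open>1 \<notin> S\<close> by auto
  then have "\<not> w\<^sub>1 dvd N * w\<^sub>1 + 1"
    by (metis dvd_add_right_iff dvd_triv_right nat_dvd_1_iff_1)
  moreover have "N * w\<^sub>1 + 1 \<in> S"
    using w\<^sub>1 by (intro cofinite) (simp add: le_SucI)
  ultimately have w\<^sub>2: "w\<^sub>2 \<in> S \<and> \<not> w\<^sub>1 dvd w\<^sub>2"
    unfolding w\<^sub>2_def by (intro LeastI) simp
  have "w\<^sub>1 dvd s" if "s \<in> S" "s < w\<^sub>2" for s
    using not_less_Least[of s "\<lambda>s. s \<in> S \<and> \<not> w\<^sub>1 dvd s"] that unfolding w\<^sub>2_def by blast
  then show thesis
    using that w\<^sub>1 least w\<^sub>2 by blast
qed

lemma min_gens_ge_least_non_multiple: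
  fixes S :: "nat set"
  assumes add_closed: "\<And>s t. s \<in> S \<Longrightarrow> t \<in> S \<Longrightarrow> s + t \<in> S"
    and w\<^sub>1: "w\<^sub>1 \<in> S" "0 < w\<^sub>1" "\<And>s. s \<in> S \<Longrightarrow> 0 < s \<Longrightarrow> w\<^sub>1 \<le> s"
    and below: "\<And>s. s \<in> S \<Longrightarrow> s < w\<^sub>2 \<Longrightarrow> w\<^sub>1 dvd s"
    and g: "g \<in> min_gens S" "g \<noteq> w\<^sub>1"
  shows "w\<^sub>2 \<le> g"
proof (rule ccontr)
  assume "\<not> w\<^sub>2 \<le> g"
  moreover have "g \<in> S" "0 < g"
    using g(1) unfolding min_gens_def by simp_all
  ultimately have "w\<^sub>1 dvd g" "w\<^sub>1 \<le> g"
    using below w\<^sub>1(3) by simp_all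
  then obtain k where k: "g = k * w\<^sub>1"
    by (metis dvdE mult.commute)
  then have "2 \<le> k"
    using g(2) \<open>w\<^sub>1 \<le> g\<close> w\<^sub>1(2) by (cases k) (auto simp: Suc_le_eq)
  then have "(k - 1) * w\<^sub>1 \<in> S" "0 < (k - 1) * w\<^sub>1" "g = w\<^sub>1 + (k - 1) * w\<^sub>1"
    using mult_mem_if_add_closed[OF add_closed w\<^sub>1(1), of "k - 1"] w\<^sub>1(2) k
    by (simp_all add: algebra_simps)
  then show False
    using min_gens_not_add[OF g(1) w\<^sub>1(1)] w\<^sub>1(2) by simp
qed

lemma sorted_list_of_set_two_least:
  fixes A :: "'a::linorder set"
  assumes "finite A" "p \<in> A" "q \<in> A" "p < q" and above: "\<And>a. a \<in> A \<Longrightarrow> a \<noteq> p \<Longrightarrow> q \<le> a"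
  shows "sorted_list_of_set A = p # q # sorted_list_of_set (A - {p, q})"
proof -
  have "Min A = p"
  proof (rule Min_eqI)
    fix a
    assume "a \<in> A"
    then show "p \<le> a"
      using above[of a] \<open>p < q\<close> by (cases "a = p") simp_all
  qed (use assms in simp_all)
  moreover have "Min (A - {p}) = q"
    using assms by (intro Min_eqI) simp_all
  moreover have "A \<noteq> {}" "A - {p} \<noteq> {}"
    using assms by auto
  ultimately show ?thesis
    using assms(1) sorted_list_of_set_nonempty[of A] sorted_list_of_set_nonempty[of "A - {p}"]
    by (simp add: Diff_insert2[symmetric])
qed

lemma k_subalgebra_const: "k_subalgebra R \<Longrightarrow> fps_const c \<in> R"
  by (simp add: k_subalgebra_def)

lemma k_subalgebra_zero: "k_subalgebra R \<Longrightarrow> 0 \<in> R"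
  using k_subalgebra_const[of R 0] by simp

lemma k_subalgebra_one: "k_subalgebra R \<Longrightarrow> 1 \<in> R"
  using k_subalgebra_const[of R 1] by simp

lemma k_subalgebra_add: "k_subalgebra R \<Longrightarrow> f \<in> R \<Longrightarrow> g \<in> R \<Longrightarrow> f + g \<in> R"
  by (simp add: k_subalgebra_def)

lemma k_subalgebra_mult: "k_subalgebra R \<Longrightarrow> f \<in> R \<Longrightarrow> g \<in> R \<Longrightarrow> f * g \<in> R"
  by (simp add: k_subalgebra_def)

lemma k_subalgebra_diff: "k_subalgebra R \<Longrightarrow> f \<in> R \<Longrightarrow> g \<in> R \<Longrightarrow> f - g \<in> R"
  using k_subalgebra_add[of R f "- g"] by (simp add: k_subalgebra_def)

lemma k_subalgebra_power: "k_subalgebra R \<Longrightarrow> f \<in> R \<Longrightarrow> f ^ q \<in> R"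
  by (induction q) (auto intro: k_subalgebra_one k_subalgebra_mult)

lemma k_subalgebra_sum: "k_subalgebra R \<Longrightarrow> (\<And>i. i \<in> A \<Longrightarrow> F i \<in> R) \<Longrightarrow> sum F A \<in> R"
  by (induction A rule: infinite_finite_induct) (auto intro: k_subalgebra_zero k_subalgebra_add)

lemma k_subalgebra_prod: "k_subalgebra R \<Longrightarrow> (\<And>i. i \<in> A \<Longrightarrow> F i \<in> R) \<Longrightarrow> prod F A \<in> R"
  by (induction A rule: infinite_finite_induct) (auto intro: k_subalgebra_one k_subalgebra_mult)

lemmas k_subalgebra_closed =
  k_subalgebra_const k_subalgebra_zero k_subalgebra_one k_subalgebra_add k_subalgebra_mult
  k_subalgebra_diff k_subalgebra_power k_subalgebra_sum k_subalgebra_prod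

lemma vals_iff: "s \<in> vals A \<longleftrightarrow> (\<exists>f\<in>A. f \<noteq> 0 \<and> subdegree f = s)"
  unfolding vals_def by auto

lemma vals_add:
  assumes "k_subalgebra R" "s \<in> vals R" "t \<in> vals R"
  shows "s + t \<in> vals R"
proof -
  obtain f g where "f \<in> R" "f \<noteq> 0" "s = subdegree f" "g \<in> R" "g \<noteq> 0" "t = subdegree g"
    using assms(2,3) unfolding vals_def by blast
  then have "f * g \<in> R - {0}" "s + t = subdegree (f * g)"
    using k_subalgebra_mult[OF assms(1)] by auto
  then show ?thesis
    unfolding vals_def by blast
qed

text \<open>Clearing the denominators of finitely many module generators of k[[t]] gives a single
  nonzero \<open>\<beta>\<close> with \<open>\<beta> k[[t]] \<subseteq> R\<close>, and \<open>\<beta> k[[t]]\<close> is the ideal generated by a power of t.\<close>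
lemma conductor_exists:
  fixes R :: "'a::field fps set"
  assumes sa: "k_subalgebra R" and "normalization_finite R" and "birational R"
  obtains N where "\<And>f. fps_X ^ N dvd f \<Longrightarrow> f \<in> R"
proof -
  obtain gs :: "'a fps list" where gs: "\<And>f. \<exists>rs. length rs = length gs \<and> set rs \<subseteq> R \<and>
      f = (\<Sum>i<length gs. rs ! i * gs ! i)"
    using assms(2) unfolding normalization_finite_def by blast
  have "\<forall>i. \<exists>a b. i < length gs \<longrightarrow> a \<in> R \<and> b \<in> R \<and> b \<noteq> 0 \<and> gs ! i * b = a"
    using assms(3) unfolding birational_def by blast
  then obtain A B where AB: "\<And>i. i < length gs \<Longrightarrow> A i \<in> R \<and> B i \<in> R \<and> B i \<noteq> 0 \<and> gs ! i * B i = A i"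
    by metis
  define \<beta> where "\<beta> = (\<Prod>i<length gs. B i)"
  have "\<beta> \<noteq> 0"
    unfolding \<beta>_def using AB by simp
  have \<beta>_gen: "\<beta> * gs ! i \<in> R" if i: "i < length gs" for i
  proof -
    have "\<beta> * gs ! i = A i * (\<Prod>j\<in>{..<length gs} - {i}. B j)"
      using AB[OF i] i unfolding \<beta>_def by (simp add: prod.remove algebra_simps)
    then show ?thesis
      using AB i by (auto intro!: k_subalgebra_closed[OF sa])
  qed
  have \<beta>_mult: "\<beta> * f \<in> R" for f
  proof -
    obtain rs where rs: "length rs = length gs" "set rs \<subseteq> R" "f = (\<Sum>i<length gs. rs ! i * gs ! i)"
      using gs by blast
    then have "\<beta> * f = (\<Sum>i<length gs. rs ! i * (\<beta> * gs ! i))"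
      by (simp add: sum_distrib_left algebra_simps)
    also have "\<dots> \<in> R"
    proof (intro k_subalgebra_sum[OF sa] k_subalgebra_mult[OF sa, of "rs ! _"])
      fix i assume "i \<in> {..<length gs}"
      then show "rs ! i \<in> R" "\<beta> * gs ! i \<in> R"
        using rs \<beta>_gen by (auto simp: subset_iff)
    qed
    finally show ?thesis .
  qed
  show thesis
  proof
    fix f :: "'a fps"
    assume "fps_X ^ subdegree \<beta> dvd f"
    then have "\<beta> dvd f"
      using \<open>\<beta> \<noteq> 0\<close> by (cases "f = 0") (simp_all add: fps_dvd_iff fps_X_power_dvd_iff_subdegree)
    then show "f \<in> R"
      using \<beta>_mult by (auto elim: dvdE)
  qed
qed

lemma ideal_prod_induct [consumes 1, case_names zero add mult]:
  assumes "h \<in> ideal_prod I J" "P 0" "\<And>x y. P x \<Longrightarrow> P y \<Longrightarrow> P (x + y)"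
    "\<And>x y. x \<in> I \<Longrightarrow> y \<in> J \<Longrightarrow> P (x * y)"
  shows "P h"
proof -
  have "P (sum_list (map (\<lambda>(x, y). x * y) ps))" if "set ps \<subseteq> I \<times> J" for ps
    using that by (induction ps) (auto intro: assms(2-4))
  then show ?thesis
    using assms(1) unfolding ideal_prod_def by blast
qed

lemma ideal_prod_mult_mem: "x \<in> I \<Longrightarrow> y \<in> J \<Longrightarrow> x * y \<in> ideal_prod I J"
  unfolding ideal_prod_def by (rule CollectI, rule exI[of _ "[(x, y)]"]) simp

lemma semigroup_ring_zero: "0 \<in> semigroup_ring A"
  by (simp add: semigroup_ring_def)

lemma semigroup_ring_add:
  assumes "f \<in> semigroup_ring A" "g \<in> semigroup_ring A"
  shows "f + g \<in> semigroup_ring A"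
  unfolding semigroup_ring_def
proof (rule CollectI, intro allI impI)
  fix i
  assume "(f + g) $ i \<noteq> 0"
  then have "f $ i \<noteq> 0 \<or> g $ i \<noteq> 0"
    by auto
  then show "i \<in> A"
    using assms unfolding semigroup_ring_def by blast
qed

lemma semigroup_ring_mult:
  assumes "f \<in> semigroup_ring A" "g \<in> semigroup_ring B"
  shows "f * g \<in> semigroup_ring {a + b |a b. a \<in> A \<and> b \<in> B}"
  unfolding semigroup_ring_def
proof (rule CollectI, intro allI impI)
  fix i
  assume "(f * g) $ i \<noteq> 0"
  then have "(\<Sum>j=0..i. f $ j * g $ (i - j)) \<noteq> 0"
    by (simp add: fps_mult_nth)
  then obtain j where "j \<le> i" "f $ j \<noteq> 0" "g $ (i - j) \<noteq> 0"
    by (metis (no_types, lifting) atLeastAtMost_iff mult_eq_0_iff sum.neutral)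
  then have "j \<in> A" "i - j \<in> B" "i = j + (i - j)"
    using assms unfolding semigroup_ring_def by auto
  then show "i \<in> {a + b |a b. a \<in> A \<and> b \<in> B}"
    by blast
qed

locale subalgebra_with_conductor =
  fixes R :: "'a::field fps set" and N :: nat
  assumes subalgebra: "k_subalgebra R"
    and conductor: "fps_X ^ N dvd f \<Longrightarrow> f \<in> R"
begin

lemmas subalgebra_closed = k_subalgebra_closed[OF subalgebra]

text \<open>Write \<open>f = c (1 - y)\<close> with \<open>y(0) = 0\<close>; the inverse is \<open>c\<^sup>-\<^sup>1 (1 + y + \<dots> + y\<^bsup>N-1\<^esup>)\<close> plus
  a multiple of \<open>y\<^sup>N\<close>, which lies in the conductor.\<close>
lemma unit_if_nth_0_nonzero:
  assumes f: "f \<in> R" "f $ 0 \<noteq> 0"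
  shows "\<exists>g\<in>R. f * g = 1"
proof -
  define c where "c = f $ 0"
  define y where "y = 1 - fps_const (inverse c) * f"
  have "c \<noteq> 0"
    using f c_def by simp
  then have c_inv: "fps_const c * fps_const (inverse c) = 1"
    by simp
  have "y \<in> R"
    unfolding y_def using f by (auto intro!: subalgebra_closed)
  have "y $ 0 = 0"
    unfolding y_def c_def using f by simp
  have f_eq: "f = fps_const c * (1 - y)"
    using \<open>c \<noteq> 0\<close> unfolding y_def by (simp flip: mult.assoc)
  have "(1 - y) $ 0 \<noteq> 0"
    using \<open>y $ 0 = 0\<close> by simp
  then have geometric: "(1 - y) * ((\<Sum>i<N. y ^ i) + y ^ N * inverse (1 - y)) = 1"
    by (simp add: distrib_left mult.left_commute[of "1 - y"] inverse_mult_eq_1' flip: one_diff_power_eq)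
  define g where "g = fps_const (inverse c) * ((\<Sum>i<N. y ^ i) + y ^ N * inverse (1 - y))"
  have "fps_X ^ N dvd y ^ N * inverse (1 - y)"
    using \<open>y $ 0 = 0\<close> by (intro dvd_mult2 dvd_power_same) (simp add: fps_X_dvd_iff)
  then have "y ^ N * inverse (1 - y) \<in> R"
    by (rule conductor)
  moreover have "(\<Sum>i<N. y ^ i) \<in> R"
    using \<open>y \<in> R\<close> by (auto intro!: subalgebra_closed)
  ultimately have "g \<in> R"
    unfolding g_def by (metis k_subalgebra_const k_subalgebra_add k_subalgebra_mult subalgebra)
  moreover have "f * g = 1"
    unfolding f_eq g_def using geometric c_inv by (simp add: ac_simps)
  ultimately show ?thesis
    by blast
qed

lemma max_ideal_iff: "f \<in> max_ideal R \<longleftrightarrow> f \<in> R \<and> f $ 0 = 0"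
proof -
  have "f * g \<noteq> 1" if "f $ 0 = 0" for g
  proof
    assume "f * g = 1"
    then have "(f * g) $ 0 = 1"
      by simp
    then show False
      using that by simp
  qed
  then show ?thesis
    unfolding max_ideal_def using unit_if_nth_0_nonzero by blast
qed

lemma max_ideal_if_subdegree_pos: "f \<in> R \<Longrightarrow> 0 < subdegree f \<Longrightarrow> f \<in> max_ideal R"
  by (metis max_ideal_iff nth_less_subdegree_zero)

lemma vals_max_ideal: "vals (max_ideal R) = vals R - {0}"
proof -
  have "f \<in> max_ideal R \<and> f \<noteq> 0 \<longleftrightarrow> f \<in> R \<and> f \<noteq> 0 \<and> subdegree f \<noteq> 0" for f
    unfolding max_ideal_iff subdegree_eq_0_iff by blast
  then show ?thesis
    by (intro set_eqI) (auto simp: vals_iff)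
qed

lemma vals_cofinite:
  assumes "N \<le> s"
  shows "s \<in> vals R"
proof -
  have "fps_X ^ s \<in> R"
    using assms by (intro conductor le_imp_power_dvd)
  then show ?thesis
    unfolding vals_iff by (auto intro!: bexI[of _ "fps_X ^ s"] simp: fps_X_power_subdegree)
qed

lemma fps_X_power_dvd_if_max_ideal:
  assumes least: "\<And>s. s \<in> vals R \<Longrightarrow> 0 < s \<Longrightarrow> w \<le> s" and h: "h \<in> max_ideal R"
  shows "fps_X ^ w dvd h"
proof (cases "h = 0")
  case False
  then have "subdegree h \<in> vals (max_ideal R)"
    using h unfolding vals_iff by blast
  then have "subdegree h \<in> vals R - {0}"
    by (simp add: vals_max_ideal)
  then show ?thesis
    using least by (simp add: fps_X_power_dvd_iff_subdegree)
qed simp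

lemma least_value_in_HK_set:
  assumes "w \<in> vals R" "0 < w" and least: "\<And>s. s \<in> vals R \<Longrightarrow> 0 < s \<Longrightarrow> w \<le> s"
  shows "w \<in> HK_set R"
proof -
  have "fps_X ^ (w + w) dvd h" if "h \<in> ideal_prod (max_ideal R) (max_ideal R)" for h
    using that
  proof (induction rule: ideal_prod_induct)
    case (mult x y)
    then show ?case
      by (simp add: power_add mult_dvd_mono fps_X_power_dvd_if_max_ideal[OF least])
  qed (simp_all add: dvd_add)
  then have "w \<notin> vals (ideal_prod (max_ideal R) (max_ideal R))"
    using \<open>0 < w\<close> by (force simp: vals_iff fps_X_power_dvd_iff_subdegree)
  then show ?thesis
    using assms(1,2) unfolding HK_set_def vals_max_ideal by simp
qed

text \<open>Subtracting suitable multiples \<open>c x\<^sup>q\<close> one coefficient at a time; the hypothesis on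
  the values of the coset \<open>h + R\<close> guarantees that each leading exponent met is a
  multiple \<open>q d\<close> of the value of \<open>x\<close>.\<close>
lemma approx_by_composition:
  assumes x: "x \<in> R" "x \<noteq> 0" "subdegree x = d" "0 < d"
    and coset_vals: "\<And>p. p \<in> R \<Longrightarrow> h - p \<noteq> 0 \<Longrightarrow> subdegree (h - p) < w \<Longrightarrow> d dvd subdegree (h - p)"
  shows "\<exists>a. (a oo x) \<in> R \<and> fps_X ^ w dvd h - (a oo x)"
proof -
  have x0: "x $ 0 = 0"
    using x by (intro nth_less_subdegree_zero) simp
  have "\<exists>a. (a oo x) \<in> R \<and> fps_X ^ j dvd h - (a oo x)" if "j \<le> w" for j
    using that
  proof (induction j)
    case 0
    show ?case
      by (intro exI[of _ 0]) (simp add: subalgebra_closed)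
  next
    case (Suc j)
    then obtain a where a: "(a oo x) \<in> R" "fps_X ^ j dvd h - (a oo x)"
      by auto
    define g where "g = h - (a oo x)"
    have g: "fps_X ^ j dvd g"
      using a(2) by (simp add: g_def)
    show ?case
    proof (cases "g $ j = 0")
      case True
      then have "fps_X ^ Suc j dvd g - 0"
        using g by (intro fps_X_power_Suc_dvd_diff) simp_all
      then show ?thesis
        using a(1) by (auto simp: g_def)
    next
      case False
      then have "g \<noteq> 0"
        by auto
      then have "j \<le> subdegree g"
        using g by (simp add: fps_X_power_dvd_iff_subdegree)
      then have "subdegree g = j"
        using subdegree_leI[OF False] by simp
      then have "d dvd j"
        using coset_vals[OF a(1)] \<open>g \<noteq> 0\<close> Suc.prems by (simp add: g_def)
      then obtain q where j: "j = q * d"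
        by (metis dvdE mult.commute)
      define c where "c = g $ j / (x $ d) ^ q"
      define a' where "a' = a + fps_const c * fps_X ^ q"
      have comp: "a' oo x = (a oo x) + fps_const c * x ^ q"
        by (simp add: a'_def fps_compose_add_distrib fps_compose_X_power[OF x0]
            flip: fps_const_mult_apply_left)
      have "x $ d \<noteq> 0"
        using x by auto
      then have lead: "(fps_const c * x ^ q) $ j = g $ j"
        using fps_pow_base[of x q] x j by (simp add: c_def mult.commute)
      have "fps_X ^ j dvd fps_const c * x ^ q"
        using x j by (intro dvd_mult) (simp add: fps_X_power_dvd_iff_subdegree mult.commute)
      then have "fps_X ^ Suc j dvd g - fps_const c * x ^ q"
        using fps_X_power_Suc_dvd_diff[OF g _ lead[symmetric]] by blast
      moreover have "a' oo x \<in> R"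
        unfolding comp using a(1) x(1) by (auto intro!: subalgebra_closed)
      ultimately show ?thesis
        by (metis comp g_def diff_diff_eq)
    qed
  qed
  then show ?thesis
    by blast
qed

lemma UNIV_if_one_in_vals:
  assumes "1 \<in> vals R"
  shows "R = UNIV"
proof -
  obtain x where x: "x \<in> R" "x \<noteq> 0" "subdegree x = 1"
    using assms unfolding vals_iff by blast
  have "h \<in> R" for h
  proof -
    obtain a where a: "(a oo x) \<in> R" "fps_X ^ N dvd h - (a oo x)"
      using approx_by_composition[OF x, of h N] by auto
    have "(h - (a oo x)) + (a oo x) \<in> R"
      using k_subalgebra_add[OF subalgebra conductor[OF a(2)] a(1)] .
    then show ?thesis
      by simp
  qed
  then show ?thesis
    by blast
qed

text \<open>Below the least value \<open>w\<^sub>2\<close> not divisible by \<open>w\<^sub>1 = v(x)\<close>, every element of the maximal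
  ideal agrees with a power series in \<open>x\<close>; as both factors are divisible by \<open>t\<close>, a product of
  two such elements agrees with one up to order \<open>w\<^sub>2 + 1\<close>.\<close>
lemma ideal_prod_max_ideal_approx:
  assumes x: "x \<in> R" "x \<noteq> 0" "subdegree x = w\<^sub>1" "0 < w\<^sub>1" and "0 < w\<^sub>2"
    and below: "\<And>s. s \<in> vals R \<Longrightarrow> s < w\<^sub>2 \<Longrightarrow> w\<^sub>1 dvd s"
    and f: "f \<in> ideal_prod (max_ideal R) (max_ideal R)"
  shows "\<exists>b. fps_X ^ Suc w\<^sub>2 dvd f - (b oo x)"
proof -
  have x0: "x $ 0 = 0"
    using x by (intro nth_less_subdegree_zero) simp
  have approx: "\<exists>a. fps_X dvd (a oo x) \<and> fps_X ^ w\<^sub>2 dvd h - (a oo x)" if "h \<in> max_ideal R" for h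
  proof -
    have h: "h \<in> R" "fps_X dvd h"
      using that by (simp_all add: max_ideal_iff fps_X_dvd_iff)
    have "w\<^sub>1 dvd subdegree (h - p)"
      if "p \<in> R" "h - p \<noteq> 0" "subdegree (h - p) < w\<^sub>2" for p
    proof -
      have "h - p \<in> R"
        using h(1) \<open>p \<in> R\<close> by (rule k_subalgebra_diff[OF subalgebra])
      then have "subdegree (h - p) \<in> vals R"
        using \<open>h - p \<noteq> 0\<close> unfolding vals_iff by blast
      then show ?thesis
        using below \<open>subdegree (h - p) < w\<^sub>2\<close> by blast
    qed
    then obtain a where a: "fps_X ^ w\<^sub>2 dvd h - (a oo x)"
      using approx_by_composition[OF x] by blast
    have "fps_X dvd fps_X ^ w\<^sub>2"
      using \<open>0 < w\<^sub>2\<close> by (simp add: dvd_power)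
    then have "fps_X dvd h - (h - (a oo x))"
      using h(2) a by (meson dvd_diff dvd_trans)
    then show ?thesis
      using a by auto
  qed
  show ?thesis
    using f
  proof (induction rule: ideal_prod_induct)
    case zero
    show ?case
      by (intro exI[of _ 0]) simp
  next
    case (add f g)
    then obtain b b' where "fps_X ^ Suc w\<^sub>2 dvd f - (b oo x)" "fps_X ^ Suc w\<^sub>2 dvd g - (b' oo x)"
      by blast
    then have "fps_X ^ Suc w\<^sub>2 dvd (f + g) - ((b + b') oo x)"
      by (metis (no_types, lifting) add_diff_add dvd_add fps_compose_add_distrib)
    then show ?case
      by blast
  next
    case (mult h h')
    obtain a a' where a: "fps_X dvd (a oo x)" "fps_X ^ w\<^sub>2 dvd h - (a oo x)"
      and a': "fps_X dvd (a' oo x)" "fps_X ^ w\<^sub>2 dvd h' - (a' oo x)"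
      using approx[OF mult(1)] approx[OF mult(2)] by blast
    define A A' r r' where "A = a oo x" "A' = a' oo x" "r = h - A" "r' = h' - A'"
    have "h * h' - ((a * a') oo x) = A * r' + r * A' + r * r'"
      by (simp add: A_A'_r_r'_def fps_compose_mult_distrib[OF x0] algebra_simps)
    moreover have "fps_X ^ Suc w\<^sub>2 dvd A * r'"
      using a(1) a'(2) by (simp add: A_A'_r_r'_def mult_dvd_mono)
    moreover have "fps_X ^ Suc w\<^sub>2 dvd r * A'"
      using mult_dvd_mono[OF a(2) a'(1)] by (simp add: A_A'_r_r'_def mult.commute)
    moreover have "fps_X ^ Suc w\<^sub>2 dvd r * r'"
    proof -
      have "fps_X ^ Suc w\<^sub>2 dvd fps_X ^ (w\<^sub>2 + w\<^sub>2)"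
        using \<open>0 < w\<^sub>2\<close> by (intro le_imp_power_dvd) simp
      also have "\<dots> dvd r * r'"
        using a(2) a'(2) by (simp add: A_A'_r_r'_def power_add mult_dvd_mono)
      finally show ?thesis .
    qed
    ultimately show ?case
      by (metis dvd_add)
  qed
qed

lemma second_generator_in_HK_set:
  assumes x: "x \<in> R" "x \<noteq> 0" "subdegree x = w\<^sub>1" "0 < w\<^sub>1"
    and w\<^sub>2: "w\<^sub>2 \<in> vals R" "\<not> w\<^sub>1 dvd w\<^sub>2"
    and below: "\<And>s. s \<in> vals R \<Longrightarrow> s < w\<^sub>2 \<Longrightarrow> w\<^sub>1 dvd s"
  shows "w\<^sub>2 \<in> HK_set R"
proof -
  have "0 < w\<^sub>2"
    using w\<^sub>2(2) by (rule contrapos_np) simp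
  have "w\<^sub>2 \<notin> vals (ideal_prod (max_ideal R) (max_ideal R))"
  proof
    assume "w\<^sub>2 \<in> vals (ideal_prod (max_ideal R) (max_ideal R))"
    then obtain f where f: "f \<in> ideal_prod (max_ideal R) (max_ideal R)" "f \<noteq> 0" "subdegree f = w\<^sub>2"
      unfolding vals_iff by blast
    then obtain b where "fps_X ^ Suc (subdegree f) dvd f - (b oo x)"
      using ideal_prod_max_ideal_approx[OF x \<open>0 < w\<^sub>2\<close> below] by auto
    then have "b oo x \<noteq> 0" "subdegree (b oo x) = w\<^sub>2"
      using subdegree_eq_if_X_power_dvd_diff f(2,3) by auto
    moreover have "x $ 0 = 0"
      using x by (intro nth_less_subdegree_zero) simp
    ultimately have "w\<^sub>2 = subdegree b * w\<^sub>1"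
      using subdegree_compose[of x b] x by force
    then show False
      using w\<^sub>2(2) by simp
  qed
  then show ?thesis
    using w\<^sub>2(1) \<open>0 < w\<^sub>2\<close> unfolding HK_set_def vals_max_ideal by simp
qed

lemma HK_set_subset_min_gens: "HK_set R \<subseteq> min_gens (vals R)"
proof
  fix s
  assume "s \<in> HK_set R"
  then have s: "s \<in> vals R" "0 < s" "s \<notin> vals (ideal_prod (max_ideal R) (max_ideal R))"
    unfolding HK_set_def vals_max_ideal by auto
  show "s \<in> min_gens (vals R)"
  proof (rule min_gensI)
    fix a b
    assume "a \<in> vals R" "b \<in> vals R" "0 < a" "0 < b"
    then obtain f g where fg: "f \<in> R" "f \<noteq> 0" "subdegree f = a" "g \<in> R" "g \<noteq> 0" "subdegree g = b"
      unfolding vals_iff by blast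
    then have "f * g \<noteq> 0" "subdegree (f * g) = a + b"
      by simp_all
    moreover have "f * g \<in> ideal_prod (max_ideal R) (max_ideal R)"
      using fg \<open>0 < a\<close> \<open>0 < b\<close> by (intro ideal_prod_mult_mem max_ideal_if_subdegree_pos) simp_all
    ultimately show "s \<noteq> a + b"
      using s(3) unfolding vals_iff by blast
  qed (use s in simp_all)
qed

lemma min_gens_subset_HK_set:
  assumes "R = semigroup_ring (vals R)"
  shows "min_gens (vals R) \<subseteq> HK_set R"
proof
  fix s
  assume s: "s \<in> min_gens (vals R)"
  define S where "S = vals R"
  define P where "P = S - {0}"
  have R: "R = semigroup_ring S"
    unfolding S_def by (rule assms)
  have m: "f \<in> semigroup_ring P" if "f \<in> max_ideal R" for f
  proof -
    have "f \<in> R" "f $ 0 = 0"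
      using that by (simp_all add: max_ideal_iff)
    show ?thesis
      unfolding semigroup_ring_def P_def
    proof (rule CollectI, intro allI impI)
      fix i
      assume "f $ i \<noteq> 0"
      then have "i \<in> S"
        using \<open>f \<in> R\<close> unfolding R semigroup_ring_def by blast
      moreover have "i \<noteq> 0"
        using \<open>f $ i \<noteq> 0\<close> \<open>f $ 0 = 0\<close> by (cases i) simp_all
      ultimately show "i \<in> S - {0}"
        by blast
    qed
  qed
  have m2: "f \<in> semigroup_ring {a + b |a b. a \<in> P \<and> b \<in> P}"
    if "f \<in> ideal_prod (max_ideal R) (max_ideal R)" for f
    using that
  proof (induction rule: ideal_prod_induct)
    case zero
    show ?case by (rule semigroup_ring_zero)
  next
    case (add f g)
    then show ?case by (rule semigroup_ring_add)
  next
    case (mult f g)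
    show ?case
      using semigroup_ring_mult[OF m[OF mult(1)] m[OF mult(2)]] .
  qed
  have "s \<notin> vals (ideal_prod (max_ideal R) (max_ideal R))"
  proof
    assume "s \<in> vals (ideal_prod (max_ideal R) (max_ideal R))"
    then obtain f where f: "f \<in> ideal_prod (max_ideal R) (max_ideal R)" "f \<noteq> 0" "subdegree f = s"
      unfolding vals_iff by blast
    then have "f $ s \<noteq> 0"
      by (metis nth_subdegree_nonzero)
    then have "s \<in> {a + b |a b. a \<in> P \<and> b \<in> P}"
      using m2[OF f(1)] unfolding semigroup_ring_def by blast
    then obtain a b where "a \<in> S" "b \<in> S" "0 < a" "0 < b" "s = a + b"
      unfolding P_def by auto
    then show False
      using min_gens_not_add[OF s[folded S_def]] by simp
  qed
  moreover have "s \<in> vals (max_ideal R)"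
    using s unfolding vals_max_ideal min_gens_def by simp
  ultimately show "s \<in> HK_set R"
    unfolding HK_set_def by blast
qed

end

text \<open>Here \<open>m = (t)\<close> and \<open>(t\<^sup>2) \<subseteq> m\<^sup>2\<close>, so a combination of two elements of \<open>m\<close> killing their
  coefficients of \<open>t\<close> lies in \<open>m\<^sup>2\<close>.\<close>
lemma has_edim_UNIV_le_1:
  assumes "has_edim (UNIV :: 'a::field fps set) n"
  shows "n \<le> 1"
proof (rule ccontr)
  assume "\<not> n \<le> 1"
  define k where "k = n - 2"
  have n: "n = Suc (Suc k)"
    using \<open>\<not> n \<le> 1\<close> by (simp add: k_def)
  interpret U: subalgebra_with_conductor "UNIV :: 'a fps set" 0
    by unfold_locales (simp_all add: k_subalgebra_def)
  define m where "m = max_ideal (UNIV :: 'a fps set)"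
  have m_iff: "f \<in> m \<longleftrightarrow> f $ 0 = 0" for f
    unfolding m_def U.max_ideal_iff by simp
  have m2: "f \<in> ideal_prod m m" if dvd: "fps_X ^ 2 dvd f" for f
  proof -
    obtain g where "f = fps_X ^ 2 * g"
      using dvd by (rule dvdE)
    then have "f = fps_X * (fps_X * g)"
      by (simp add: power2_eq_square mult.assoc)
    moreover have "fps_X \<in> m" "fps_X * g \<in> m"
      unfolding m_iff by simp_all
    ultimately show ?thesis
      using ideal_prod_mult_mem by metis
  qed
  obtain fs where fs: "length fs = n" "set fs \<subseteq> m"
    and ind: "\<And>cs. length cs = n \<Longrightarrow> (\<Sum>i<n. fps_const (cs ! i) * fs ! i) \<in> ideal_prod m m \<Longrightarrow>
      \<forall>i<n. cs ! i = (0::'a)"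
    using assms unfolding has_edim_def Let_def m_def by blast
  have "fs ! i \<in> m" if "i < n" for i
    using fs that by (metis nth_mem subsetD)
  then have fs_0: "fs ! 0 $ 0 = 0" "fs ! 1 $ 0 = 0"
    unfolding m_iff using n by simp_all
  obtain c\<^sub>0 c\<^sub>1 :: 'a where c: "c\<^sub>0 \<noteq> 0 \<or> c\<^sub>1 \<noteq> 0" "c\<^sub>0 * (fs ! 0 $ 1) + c\<^sub>1 * (fs ! 1 $ 1) = 0"
  proof (cases "fs ! 0 $ 1 = 0")
    case True
    then show ?thesis
      using that[of 1 0] by simp
  next
    case False
    then show ?thesis
      using that[of "fs ! 1 $ 1" "- (fs ! 0 $ 1)"] by (simp add: mult.commute)
  qed
  define cs where "cs = c\<^sub>0 # c\<^sub>1 # replicate k 0"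
  have "(\<Sum>i<n. fps_const (cs ! i) * fs ! i) = fps_const c\<^sub>0 * fs ! 0 + fps_const c\<^sub>1 * fs ! 1"
    unfolding n cs_def sum.lessThan_Suc_shift by simp
  moreover have "fps_X ^ 2 dvd fps_const c\<^sub>0 * fs ! 0 + fps_const c\<^sub>1 * fs ! 1"
    unfolding fps_X_power_dvd_iff_nth using fs_0 c(2) by (auto simp: less_2_cases_iff)
  ultimately have "(\<Sum>i<n. fps_const (cs ! i) * fs ! i) \<in> ideal_prod m m"
    using m2 by simp
  then have "\<forall>i<n. cs ! i = 0"
    by (intro ind) (simp add: cs_def n)
  then have "cs ! 0 = 0" "cs ! 1 = 0"
    using n by simp_all
  then show False
    using c(1) by (simp add: cs_def)
qed

context subalgebra_with_conductor
begin

lemma one_notin_vals_if_has_edim: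
  assumes "has_edim R n" "2 \<le> n"
  shows "1 \<notin> vals R"
proof
  assume "1 \<in> vals R"
  then have "has_edim (UNIV :: 'a fps set) n"
    using assms(1) UNIV_if_one_in_vals by simp
  then show False
    using has_edim_UNIV_le_1 assms(2) by fastforce
qed

lemma obtain_two_least_min_gens_in_HK_set:
  assumes "1 \<notin> vals R"
  obtains w\<^sub>1 w\<^sub>2 where "w\<^sub>1 < w\<^sub>2" "w\<^sub>1 \<in> HK_set R" "w\<^sub>2 \<in> HK_set R"
    "\<And>g. g \<in> min_gens (vals R) \<Longrightarrow> g \<noteq> w\<^sub>1 \<Longrightarrow> w\<^sub>2 \<le> g"
proof -
  obtain w\<^sub>1 w\<^sub>2 where w\<^sub>1: "w\<^sub>1 \<in> vals R" "0 < w\<^sub>1" "\<And>s. s \<in> vals R \<Longrightarrow> 0 < s \<Longrightarrow> w\<^sub>1 \<le> s"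
    and w\<^sub>2: "w\<^sub>2 \<in> vals R" "\<not> w\<^sub>1 dvd w\<^sub>2" and below: "\<And>s. s \<in> vals R \<Longrightarrow> s < w\<^sub>2 \<Longrightarrow> w\<^sub>1 dvd s"
    using obtain_least_positive_and_least_non_multiple[OF vals_cofinite assms] by blast
  obtain x where x: "x \<in> R" "x \<noteq> 0" "subdegree x = w\<^sub>1"
    using w\<^sub>1(1) unfolding vals_iff by blast
  have "0 < w\<^sub>2"
    using w\<^sub>2(2) by (rule contrapos_np) simp
  then have "w\<^sub>1 < w\<^sub>2"
    using w\<^sub>1(3)[OF w\<^sub>2(1)] w\<^sub>2(2) by (metis dvd_refl le_neq_implies_less)
  moreover have "w\<^sub>1 \<in> HK_set R"
    by (rule least_value_in_HK_set[OF w\<^sub>1])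
  moreover have "w\<^sub>2 \<in> HK_set R"
    by (rule second_generator_in_HK_set[OF x w\<^sub>1(2) w\<^sub>2 below])
  moreover have "w\<^sub>2 \<le> g" if "g \<in> min_gens (vals R)" "g \<noteq> w\<^sub>1" for g
    by (rule min_gens_ge_least_non_multiple[OF vals_add[OF subalgebra] w\<^sub>1 below that])
  ultimately show thesis
    using that by blast
qed

end

theorem mainTheorem5:
  fixes R :: "('a::field) fps set" and n :: nat
  assumes "k_subalgebra R"
    and "normalization_finite R"
    and "birational R"
    and "has_edim R n"
    and "2 \<le> n"
  shows "let a = sorted_list_of_set (HK_set R);
             w = sorted_list_of_set (min_gens (vals R))
         in 1 < length a \<and> a ! 0 = w ! 0 \<and> a ! 1 = w ! 1 \<and> set a \<subseteq> set w \<and>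
            (R = semigroup_ring (vals R) \<longrightarrow> set a = set w)"
proof -
  obtain N where "\<And>f. fps_X ^ N dvd f \<Longrightarrow> f \<in> R"
    using conductor_exists[OF assms(1-3)] by blast
  then interpret subalgebra_with_conductor R N
    using assms(1) by unfold_locales
  obtain w\<^sub>1 w\<^sub>2 where w: "w\<^sub>1 < w\<^sub>2" "w\<^sub>1 \<in> HK_set R" "w\<^sub>2 \<in> HK_set R"
    and above: "\<And>g. g \<in> min_gens (vals R) \<Longrightarrow> g \<noteq> w\<^sub>1 \<Longrightarrow> w\<^sub>2 \<le> g"
    using obtain_two_least_min_gens_in_HK_set[OF one_notin_vals_if_has_edim[OF assms(4,5)]] by blast
  have HK: "HK_set R \<subseteq> min_gens (vals R)"
    by (rule HK_set_subset_min_gens)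
  have "finite (min_gens (vals R))" "finite (HK_set R)"
    using finite_min_gens[OF vals_cofinite] HK by (auto intro: finite_subset)
  then have "set (sorted_list_of_set (min_gens (vals R))) = min_gens (vals R)"
    "set (sorted_list_of_set (HK_set R)) = HK_set R"
    and "sorted_list_of_set (min_gens (vals R)) =
      w\<^sub>1 # w\<^sub>2 # sorted_list_of_set (min_gens (vals R) - {w\<^sub>1, w\<^sub>2})"
    "sorted_list_of_set (HK_set R) = w\<^sub>1 # w\<^sub>2 # sorted_list_of_set (HK_set R - {w\<^sub>1, w\<^sub>2})"
    using w above HK by (auto intro!: sorted_list_of_set_two_least)
  moreover have "R = semigroup_ring (vals R) \<longrightarrow> HK_set R = min_gens (vals R)"
    using min_gens_subset_HK_set HK by blast
  ultimately show ?thesis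
    using HK unfolding Let_def by simp
qed

end
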